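(* Let $f\ge0$ be integrable on $[-\pi,\pi]$ with $\int f>0$, let $\sigma_n^2(f)=\min_{q\in\mathcal{Q}_n(1)}\int_{-\pi}^{\pi}|q(e^{i\lambda})|^2f(\lambda)\,d\lambda$ and $\sigma_n(f)=\sqrt{\sigma_n^2(f)}$. Then: (a) if $f(\lambda)>0$ for almost every $\lambda$ in some neighborhood of $0$, then $\lim_{n\to\infty}\sqrt[n]{\sigma_n(f)}=1$; (b) if $f(\lambda)=0$ for almost every $\lambda$ with $|\lambda|<\alpha$, where $0<\alpha<\pi$, then $\lim_{n\to\infty}\sqrt[n]{\sigma_n(f)}\le\cos(\alpha/2)$; in particular $\sigma_n(f)$ decreases at least exponentially.
   Context: $\mathcal{Q}_n(1)$ denotes the set of complex polynomials of degree at most $n$ with $q(1)=1$; $\sigma_n^2(f)$ is the variance of the best linear unbiased estimator of the constant mean $m$ of $X(t)=m+Y(t)$ from $X(0),\dots,X(n)$, where $Y$ is a centered stationary process with spectral density $f$. *)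

theory Defs
  imports "HOL-Analysis.Analysis" "HOL-Computational_Algebra.Polynomial"
begin

definition Qn1 :: "nat \<Rightarrow> complex poly set" where
  "Qn1 n = {q. degree q \<le> n \<and> poly q 1 = 1}"

text \<open>sigma_n^2(f) = min over q in Q_n(1) of the integral of |q(e^{i lambda})|^2 f(lambda)
  over [-pi,pi]. The minimum is attained; we write it as an infimum.\<close>
definition sigma_sq :: "nat \<Rightarrow> (real \<Rightarrow> real) \<Rightarrow> real" where
  "sigma_sq n f = (INF q \<in> Qn1 n. integral {-pi..pi} (\<lambda>x. (cmod (poly q (cis x)))^2 * f x))"

definition sigma :: "nat \<Rightarrow> (real \<Rightarrow> real) \<Rightarrow> real" where
  "sigma n f = sqrt (sigma_sq n f)"

end

(* Upper bounds come from test polynomials: q = 1 gives sigma_n(f) <= (int f)^(1/2), and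
   q(z) = ((1 + z) / 2)^n, for which |q(e^(i lambda))| = |cos (lambda / 2)|^n, gives
   sigma_n(f) <= cos (alpha / 2)^n (int f)^(1/2) when f vanishes near 0.

   The lower bound in (a) is a Remez-type inequality. Fix a small delta and q in Q_n(1) with
   I = int |q(e^(i lambda))|^2 f small. Since f > 0 a.e. near 0, f <= eps only on a set of
   measure rho << delta / n in [-delta, delta], and by Markov's inequality
   |q(e^(i lambda))|^2 <= T = I / (eps rho) outside another set of measure rho. Hence all but a few of the 2n + 1 cells of an equispaced grid in
   [-delta, delta] contain a point where |q|^2 <= T, and Lagrange interpolation at these at least
   n + 1 points bounds 1 = q(1) by (2n + 1) sqrt T r^n, where r -> 1 as delta -> 0. So
   sigma_n(f) >= c / (n r^n), and the n-th root of sigma_n(f) tends to 1. *)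

theory Submission
  imports Defs "HOL-Real_Asymp.Real_Asymp"
begin

section \<open>Lagrange interpolation at a perturbed grid\<close>

lemma poly_lagrange_interpolation:
  fixes p :: "'a::field poly" and z :: "'b \<Rightarrow> 'a"
  assumes "finite S" and "inj_on z S" and "degree p < card S"
  shows "poly p x = (\<Sum>j\<in>S. poly p (z j) * (\<Prod>k\<in>S-{j}. (x - z k) / (z j - z k)))"
proof -
  define l where "l = (\<Sum>j\<in>S. smult (poly p (z j) / (\<Prod>k\<in>S-{j}. z j - z k)) (\<Prod>k\<in>S-{j}. [:- z k, 1:]))"
  have poly_l: "poly l y = (\<Sum>j\<in>S. poly p (z j) * (\<Prod>k\<in>S-{j}. (y - z k) / (z j - z k)))" for y
    unfolding l_def poly_sum poly_smult poly_prod by (simp add: prod_dividef)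
  have "degree l \<le> card S - 1"
    unfolding l_def
  proof (intro degree_sum_le \<open>finite S\<close>)
    fix j assume "j \<in> S"
    have "degree (\<Prod>k\<in>S-{j}. [:- z k, 1:]) \<le> (\<Sum>k\<in>S-{j}. degree [:- z k, 1:])"
      using degree_prod_sum_le[of "S-{j}" "\<lambda>k. [:- z k, 1:]"] \<open>finite S\<close> by (simp add: o_def)
    also have "\<dots> = card S - 1" using \<open>finite S\<close> \<open>j \<in> S\<close> by simp
    finally show "degree (smult (poly p (z j) / (\<Prod>k\<in>S-{j}. z j - z k)) (\<Prod>k\<in>S-{j}. [:- z k, 1:]))
        \<le> card S - 1"
      by (meson degree_smult_le order_trans)
  qed
  then have deg_l: "degree l < card S" using assms(3) by linarith
  have "poly l (z i) = poly p (z i)" if "i \<in> S" for i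
  proof -
    have "z i \<noteq> z k" if "k \<in> S - {i}" for k
      using assms(2) \<open>i \<in> S\<close> that by (auto dest: inj_onD)
    then have one: "(\<Prod>k\<in>S-{i}. (z i - z k) / (z i - z k)) = 1" by (auto intro!: prod.neutral)
    have "(\<Prod>k\<in>S-{j}. (z i - z k) / (z j - z k)) = 0" if "j \<in> S - {i}" for j
      using assms(1) \<open>i \<in> S\<close> that by (intro prod_zero bexI[of _ i]) auto
    then have zero: "(\<Sum>j\<in>S-{i}. poly p (z j) * (\<Prod>k\<in>S-{j}. (z i - z k) / (z j - z k))) = 0"
      by (intro sum.neutral) simp
    show ?thesis
      unfolding poly_l sum.remove[OF assms(1) \<open>i \<in> S\<close>] one zero by simp
  qed
  moreover have "card (z ` S) = card S" using card_image[OF assms(2)] .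
  ultimately have "p = l"
    using assms(3) deg_l by (intro poly_eqI_degree[of "z ` S"]) auto
  then have "poly p x = poly l x" by simp
  also have "\<dots> = (\<Sum>j\<in>S. poly p (z j) * (\<Prod>k\<in>S-{j}. (x - z k) / (z j - z k)))" by (rule poly_l)
  finally show ?thesis .
qed

text \<open>Up to the factor \<open>(1 + w) h\<close>, \<open>centre_dist L k\<close> bounds the distance from \<open>0\<close> of the node
  near \<open>(k - L) h\<close>; the value \<open>1\<close> at \<open>k = L\<close> absorbs the perturbation of the central node.\<close>
definition centre_dist :: "nat \<Rightarrow> nat \<Rightarrow> real" where
  "centre_dist L k = (if k = L then 1 else \<bar>real k - real L\<bar>)"

lemma centre_dist_ge_1: "centre_dist L k \<ge> 1"
  unfolding centre_dist_def by auto

lemma prod_greaterThanAtMost_diff_eq_fact: "(\<Prod>k\<in>{a<..a+n}. real k - real a) = fact n"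
proof -
  have "{a<..a+n} = (\<lambda>i. a + Suc i) ` {0..<n}"
  proof safe
    fix x assume "x \<in> {a<..a+n}"
    then show "x \<in> (\<lambda>i. a + Suc i) ` {0..<n}"
      by (intro image_eqI[of _ _ "x - a - 1"]) auto
  qed auto
  then have "(\<Prod>k\<in>{a<..a+n}. real k - real a) = (\<Prod>i\<in>{0..<n}. real (Suc i))"
    by (simp add: prod.reindex inj_on_def)
  also have "\<dots> = fact n" by (simp add: fact_prod_Suc)
  finally show ?thesis .
qed

lemma prod_atLeastLessThan_diff_eq_fact: "(\<Prod>k\<in>{0..<n}. real n - real k) = fact n"
  using fact_prod_rev[of n, where 'a=real] by (simp add: of_nat_diff)

lemma prod_centre_dist: "(\<Prod>k\<in>{0..2*L}. centre_dist L k) = fact L * fact L"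
proof -
  have split: "{0..2*L} = {0..<L} \<union> ({L} \<union> {L<..L+L})" by auto
  have "(\<Prod>k\<in>{0..2*L}. centre_dist L k)
      = (\<Prod>k\<in>{0..<L}. centre_dist L k) * ((\<Prod>k\<in>{L}. centre_dist L k) * (\<Prod>k\<in>{L<..L+L}. centre_dist L k))"
    unfolding split by (subst prod.union_disjoint; auto)+
  also have "\<dots> = (\<Prod>k\<in>{0..<L}. centre_dist L k) * (\<Prod>k\<in>{L<..L+L}. centre_dist L k)"
    by (simp add: centre_dist_def)
  also have "\<dots> = (\<Prod>k\<in>{0..<L}. real L - real k) * (\<Prod>k\<in>{L<..L+L}. real k - real L)"
    by (intro arg_cong2[where f = times] prod.cong) (auto simp: centre_dist_def)
  finally show ?thesis
    by (simp only: prod_greaterThanAtMost_diff_eq_fact prod_atLeastLessThan_diff_eq_fact)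
qed

lemma prod_abs_diff_grid:
  assumes "j \<le> 2*L"
  shows "(\<Prod>k\<in>{0..2*L}-{j}. \<bar>real j - real k\<bar>) = fact j * fact (2*L - j)"
proof -
  have split: "{0..2*L}-{j} = {0..<j} \<union> {j<..j + (2*L - j)}" using assms by auto
  have "(\<Prod>k\<in>{0..2*L}-{j}. \<bar>real j - real k\<bar>)
      = (\<Prod>k\<in>{0..<j}. \<bar>real j - real k\<bar>) * (\<Prod>k\<in>{j<..j + (2*L - j)}. \<bar>real j - real k\<bar>)"
    unfolding split by (subst prod.union_disjoint) auto
  also have "\<dots> = (\<Prod>k\<in>{0..<j}. real j - real k) * (\<Prod>k\<in>{j<..j + (2*L - j)}. real k - real j)"
    by (intro arg_cong2[where f = times] prod.cong) auto
  finally show ?thesis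
    by (simp only: prod_greaterThanAtMost_diff_eq_fact prod_atLeastLessThan_diff_eq_fact)
qed

lemma fact_mult_fact_ge_central:
  assumes "j \<le> 2*L"
  shows "(fact L * fact L :: real) \<le> fact j * fact (2*L - j)"
proof -
  have "real ((2*L) choose j) \<le> real ((2*L) choose L)"
    using binomial_maximum'[of L j] by simp
  then have "fact (2*L) / (fact j * fact (2*L - j)) \<le> (fact (2*L) / (fact L * fact L) :: real)"
    using binomial_fact[OF assms, where 'a=real] binomial_fact[of L "2*L", where 'a=real] by simp
  then show ?thesis by (simp add: divide_le_cancel field_simps)
qed

lemma card_le_of_centre_dist_le:
  assumes "\<And>k. k \<in> M \<Longrightarrow> centre_dist L k \<le> V" and "V \<ge> 0"
  shows "real (card M) \<le> 2 * V + 1"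
proof -
  define r where "r = nat \<lfloor>V\<rfloor>"
  have "M \<subseteq> {L - r .. L + r}"
  proof
    fix k assume "k \<in> M"
    then have "\<bar>real k - real L\<bar> \<le> V"
      using assms(1)[OF \<open>k \<in> M\<close>] assms(2) by (cases "k = L") (auto simp: centre_dist_def)
    then have "\<bar>int k - int L\<bar> \<le> \<lfloor>V\<rfloor>"
      by (metis floor_mono floor_of_int of_int_abs of_int_diff of_int_of_nat_eq)
    then show "k \<in> {L - r .. L + r}" unfolding r_def by auto
  qed
  then have "card M \<le> 2 * r + 1"
    using card_mono[of "{L - r .. L + r}" M] by simp
  moreover have "real r \<le> V" using assms(2) unfolding r_def by simp
  ultimately show ?thesis by linarith
qed

text \<open>Indices cannot crowd around the centre: among \<open>m\<close> of them the farthest has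
  \<open>centre_dist\<close> at least \<open>m / 3\<close>.\<close>
lemma fact_card_le_prod_centre_dist:
  assumes "finite M"
  shows "fact (card M) \<le> 3 ^ card M * (\<Prod>k\<in>M. centre_dist L k)"
  using assms
proof (induction "card M" arbitrary: M)
  case 0
  then show ?case by simp
next
  case (Suc c)
  define V where "V = Max (centre_dist L ` M)"
  have "M \<noteq> {}" using Suc.hyps(2) by auto
  then have "V \<in> centre_dist L ` M" unfolding V_def using Suc.prems by (intro Max_in) auto
  then obtain k0 where k0: "k0 \<in> M" "centre_dist L k0 = V" by auto
  have V1: "V \<ge> 1" using centre_dist_ge_1[of L k0] k0 by simp
  have "real (card M) \<le> 2 * V + 1"
    using V1 Suc.prems by (intro card_le_of_centre_dist_le[of _ L]) (auto simp: V_def)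
  then have card_le: "real (Suc c) \<le> 3 * V" using Suc.hyps(2) V1 by simp
  have IH: "fact c \<le> 3 ^ c * (\<Prod>k\<in>M - {k0}. centre_dist L k)"
  proof -
    have "card (M - {k0}) = c" using Suc.hyps(2) Suc.prems k0(1) by simp
    then show ?thesis using Suc.hyps(1)[of "M - {k0}"] Suc.prems by simp
  qed
  have "fact (Suc c) = real (Suc c) * fact c" by (rule fact_Suc)
  also have "\<dots> \<le> (3 * V) * (3 ^ c * (\<Prod>k\<in>M - {k0}. centre_dist L k))"
    using V1 card_le IH by (intro mult_mono) (auto intro!: prod_nonneg order_trans[OF _ centre_dist_ge_1])
  also have "\<dots> = 3 ^ Suc c * (\<Prod>k\<in>M. centre_dist L k)"
    using prod.remove[OF Suc.prems k0(1), of "centre_dist L"] k0 by simp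
  finally show ?case using Suc.hyps(2) by simp
qed

lemma prod_Diff_times_prod_complement:
  assumes "S \<subseteq> G" "finite G" "j \<in> S"
  shows "(\<Prod>k\<in>S-{j}. g k) * (\<Prod>k\<in>G-S. g k) = (\<Prod>k\<in>G-{j}. g k)"
proof -
  have "G - {j} = (S - {j}) \<union> (G - S)" "(S - {j}) \<inter> (G - S) = {}" using assms by auto
  moreover have "finite (S - {j})" "finite (G - S)" using assms finite_subset by auto
  ultimately show ?thesis by (metis prod.union_disjoint)
qed

text \<open>Over the full grid both products are comparable with \<open>L!\<^sup>2\<close>, so only the \<open>m\<close> missing
  indices cost a factor.\<close>
lemma prod_centre_dist_div_le:
  assumes "S \<subseteq> {0..2*L}" "j \<in> S"
  defines "m \<equiv> card ({0..2*L} - S)"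
  shows "(\<Prod>k\<in>S-{j}. centre_dist L k / \<bar>real j - real k\<bar>) \<le> (6 * real L) ^ m / fact m"
proof -
  define G where "G = {0..2*L}"
  define PS where "PS = (\<Prod>k\<in>S-{j}. centre_dist L k)"
  define PM where "PM = (\<Prod>k\<in>G-S. centre_dist L k)"
  define DS where "DS = (\<Prod>k\<in>S-{j}. \<bar>real j - real k\<bar>)"
  define DM where "DM = (\<Prod>k\<in>G-S. \<bar>real j - real k\<bar>)"
  have j: "j \<in> G" "j \<le> 2*L" using assms unfolding G_def by auto
  have "finite G" "S \<subseteq> G" using assms unfolding G_def by auto
  note split = prod_Diff_times_prod_complement[OF \<open>S \<subseteq> G\<close> \<open>finite G\<close> \<open>j \<in> S\<close>]
  have PM_pos: "PM > 0" unfolding PM_def by (intro prod_pos) (auto intro: less_le_trans[OF _ centre_dist_ge_1])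
  have DM_pos: "DM > 0" unfolding DM_def using \<open>j \<in> S\<close> by (intro prod_pos) auto
  have DS_pos: "DS > 0" unfolding DS_def by (intro prod_pos) auto
  have "PS * PM = (\<Prod>k\<in>G-{j}. centre_dist L k)" unfolding PS_def PM_def split ..
  also have "\<dots> \<le> centre_dist L j * (\<Prod>k\<in>G-{j}. centre_dist L k)"
  proof -
    have "0 \<le> (\<Prod>k\<in>G-{j}. centre_dist L k)"
      by (auto intro!: prod_nonneg order_trans[OF _ centre_dist_ge_1])
    then show ?thesis using centre_dist_ge_1[of L j] mult_right_mono[of 1 "centre_dist L j"] by simp
  qed
  also have "\<dots> = fact L * fact L"
    using prod.remove[OF \<open>finite G\<close> j(1), of "centre_dist L"] prod_centre_dist[of L]
    unfolding G_def by simp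
  finally have PS_le: "PS \<le> fact L * fact L / PM" using PM_pos by (simp add: field_simps)
  have "fact L * fact L \<le> DS * DM"
    unfolding DS_def DM_def split unfolding G_def prod_abs_diff_grid[OF j(2)]
    by (rule fact_mult_fact_ge_central[OF j(2)])
  then have DS_ge: "fact L * fact L / DM \<le> DS" using DM_pos by (simp add: field_simps)
  have "DM \<le> (\<Prod>k\<in>G-S. 2 * real L)"
    unfolding DM_def using j(2) by (intro prod_mono) (auto simp: G_def)
  then have DM_le: "DM \<le> (2 * real L) ^ m" unfolding m_def G_def by simp
  have PM_ge: "fact m / 3 ^ m \<le> PM"
    using fact_card_le_prod_centre_dist[of "G - S" L] \<open>finite G\<close>
    unfolding PM_def m_def G_def by (simp add: field_simps)
  have "(\<Prod>k\<in>S-{j}. centre_dist L k / \<bar>real j - real k\<bar>) = PS / DS"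
    unfolding PS_def DS_def by (rule prod_dividef)
  also have "\<dots> \<le> (fact L * fact L / PM) / (fact L * fact L / DM)"
    using PS_le DS_ge PM_pos DM_pos by (intro frac_le) (auto intro: order_trans[OF _ PS_le])
  also have "\<dots> = DM / PM" by simp
  also have "\<dots> \<le> (2 * real L) ^ m / (fact m / 3 ^ m)"
    using DM_le PM_ge DM_pos by (intro frac_le) auto
  also have "\<dots> = (6 * real L) ^ m / fact m"
    by (simp add: power_mult_distrib flip: power_mult_distrib[of 2 3])
  finally show ?thesis .
qed

lemma norm_cis_diff: "cmod (cis a - cis b) = 2 * \<bar>sin ((a - b) / 2)\<bar>"
proof -
  define t where "t = a - b"
  have "cis a - cis b = cis b * (cis t - 1)" unfolding t_def by (simp add: right_diff_distrib cis_mult)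
  then have "cmod (cis a - cis b) = cmod (cis t - 1)" by (simp add: norm_mult)
  also have "\<dots> = sqrt ((cos t - 1)^2 + (sin t)^2)" by (simp add: cmod_def)
  also have "(cos t - 1)^2 + (sin t)^2 = (2 * sin (t/2))^2"
    using cos_double_sin[of "t/2"] sin_cos_squared_add[of t] by (simp add: power2_eq_square algebra_simps)
  finally show ?thesis unfolding t_def by (simp only: real_sqrt_abs abs_mult)
qed

lemma norm_cis_diff_le: "cmod (cis a - cis b) \<le> \<bar>a - b\<bar>"
  using abs_sin_x_le_abs_x[of "(a - b) / 2"] unfolding norm_cis_diff by simp

lemma cos_ge_1_minus_sq_half: "1 - x^2 / 2 \<le> cos (x::real)"
proof -
  have "(sin (x/2))^2 \<le> (x/2)^2"
    using abs_sin_x_le_abs_x[of "x/2"] by (metis abs_ge_zero power2_abs power_mono)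
  then show ?thesis using cos_double_sin[of "x/2"] by (simp add: power_divide)
qed

lemma mult_cos_le_sin:
  fixes x :: real
  assumes "0 \<le> x" "x \<le> pi"
  shows "x * cos x \<le> sin x"
proof -
  define g where "g y = sin y - y * cos y" for y :: real
  have "g 0 \<le> g x"
  proof (rule DERIV_nonneg_imp_nondecreasing[OF assms(1)])
    fix y assume y: "0 \<le> y" "y \<le> x"
    have "DERIV g y :> y * sin y"
      unfolding g_def by (auto intro!: derivative_eq_intros simp: algebra_simps)
    moreover have "y * sin y \<ge> 0" using y assms sin_ge_zero[of y] by simp
    ultimately show "\<exists>d. DERIV g y :> d \<and> d \<ge> 0" by blast
  qed
  then show ?thesis unfolding g_def by simp
qed

lemma norm_cis_diff_ge:
  assumes "\<bar>a - b\<bar> \<le> 2 * pi"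
  shows "(1 - (a - b)^2 / 8) * \<bar>a - b\<bar> \<le> cmod (cis a - cis b)"
proof -
  define x where "x = \<bar>a - b\<bar> / 2"
  have x: "0 \<le> x" "x \<le> pi" using assms unfolding x_def by auto
  have "x * (1 - x^2/2) \<le> x * cos x" using cos_ge_1_minus_sq_half[of x] x by (intro mult_left_mono)
  also have "\<dots> \<le> sin x" by (rule mult_cos_le_sin[OF x])
  also have "sin x = \<bar>sin ((a - b)/2)\<bar>"
  proof -
    have "sin x = sin ((a - b)/2) \<or> sin x = - sin ((a - b)/2)"
      unfolding x_def using sin_minus[of "(a - b)/2"] by (cases "a \<ge> b") (auto simp: minus_divide_left)
    then show ?thesis using sin_ge_zero[OF x] by auto
  qed
  finally have "x * (1 - x^2/2) \<le> \<bar>sin ((a - b)/2)\<bar>" .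
  moreover have "x^2 = (a - b)^2/4" unfolding x_def by (simp add: power_divide)
  ultimately show ?thesis unfolding norm_cis_diff x_def by (simp add: field_simps)
qed

lemma norm_cis_diff_ge_near_0:
  assumes "\<bar>a\<bar> \<le> \<delta>" "\<bar>b\<bar> \<le> \<delta>" "\<delta> \<le> pi"
  shows "(1 - \<delta>^2/2) * \<bar>a - b\<bar> \<le> cmod (cis a - cis b)"
proof -
  have "\<bar>a - b\<bar> \<le> 2 * \<delta>" using assms by linarith
  then have "(a - b)^2 \<le> (2 * \<delta>)^2"
    by (metis abs_ge_zero power2_abs power_mono)
  then have "(1 - \<delta>^2/2) * \<bar>a - b\<bar> \<le> (1 - (a - b)^2 / 8) * \<bar>a - b\<bar>"
    by (intro mult_right_mono) (auto simp: power_mult_distrib)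
  also have "\<dots> \<le> cmod (cis a - cis b)"
    using \<open>\<bar>a - b\<bar> \<le> 2 * \<delta>\<close> assms(3) by (intro norm_cis_diff_ge) linarith
  finally show ?thesis .
qed

lemma perturbed_grid_separation:
  fixes h w :: real
  assumes "\<bar>u - (real j - real L) * h\<bar> \<le> w * h" "\<bar>v - (real k - real L) * h\<bar> \<le> w * h"
    and "j \<noteq> k" "h > 0" "w \<ge> 0"
  shows "(1 - 2*w) * \<bar>real j - real k\<bar> * h \<le> \<bar>u - v\<bar>"
proof -
  have "\<bar>(real j - real L) * h - (real k - real L) * h\<bar> = \<bar>real j - real k\<bar> * h"
    using \<open>h > 0\<close> by (simp add: abs_mult flip: left_diff_distrib)
  moreover have "2 * w * h \<le> 2 * w * h * \<bar>real j - real k\<bar>"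
    using assms(3-5) mult_left_mono[of 1 "\<bar>real j - real k\<bar>" "2 * w * h"] by simp
  ultimately show ?thesis using assms(1,2) by (simp add: algebra_simps)
qed

lemma perturbed_grid_abs_le:
  fixes h w :: real
  assumes "\<bar>u - (real k - real L) * h\<bar> \<le> w * h" "h > 0" "w \<ge> 0"
  shows "\<bar>u\<bar> \<le> (1 + w) * h * centre_dist L k"
proof (cases "k = L")
  case True
  then show ?thesis using assms by (simp add: centre_dist_def algebra_simps)
next
  case False
  then have "1 \<le> \<bar>real k - real L\<bar>" by linarith
  then have "w * h \<le> w * h * \<bar>real k - real L\<bar>"
    using assms(2,3) mult_left_mono[of 1 "\<bar>real k - real L\<bar>" "w * h"] by simp
  moreover have "\<bar>(real k - real L) * h\<bar> = \<bar>real k - real L\<bar> * h" using assms(2) by (simp add: abs_mult)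
  ultimately show ?thesis using False assms(1) by (simp add: centre_dist_def algebra_simps)
qed

lemma lagrange_factor_perturbed_grid_le:
  fixes h w c :: real
  assumes near_j: "\<bar>u - (real j - real L) * h\<bar> \<le> w * h"
    and near_k: "\<bar>v - (real k - real L) * h\<bar> \<le> w * h"
    and "j \<noteq> k" "h > 0" "0 \<le> w" "w < 1/2" "c > 0"
    and chord: "c * \<bar>u - v\<bar> \<le> cmod (cis u - cis v)"
  shows "cmod ((1 - cis v) / (cis u - cis v))
           \<le> (1 + w) / (c * (1 - 2*w)) * (centre_dist L k / \<bar>real j - real k\<bar>)"
proof -
  have num: "cmod (1 - cis v) \<le> (1 + w) * h * centre_dist L k"
    using norm_cis_diff_le[of 0 v] perturbed_grid_abs_le[OF near_k \<open>h > 0\<close> \<open>0 \<le> w\<close>] by simp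
  have den_pos: "0 < c * (1 - 2*w) * \<bar>real j - real k\<bar> * h"
    using assms(3-7) by simp
  have "c * ((1 - 2*w) * \<bar>real j - real k\<bar> * h) \<le> c * \<bar>u - v\<bar>"
    using perturbed_grid_separation[OF near_j near_k assms(3-5)] \<open>c > 0\<close> by simp
  then have den: "c * (1 - 2*w) * \<bar>real j - real k\<bar> * h \<le> cmod (cis u - cis v)"
    using chord by (simp add: mult.assoc)
  have "cmod ((1 - cis v) / (cis u - cis v)) = cmod (1 - cis v) / cmod (cis u - cis v)"
    by (simp add: norm_divide)
  also have "\<dots> \<le> ((1 + w) * h * centre_dist L k) / (c * (1 - 2*w) * \<bar>real j - real k\<bar> * h)"
    using num den den_pos \<open>h > 0\<close> \<open>0 \<le> w\<close> centre_dist_ge_1[of L k] by (intro frac_le) auto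
  also have "\<dots> = (h * ((1 + w) * centre_dist L k)) / (h * (c * (1 - 2*w) * \<bar>real j - real k\<bar>))"
    by (simp add: ac_simps)
  also have "\<dots> = (1 + w) / (c * (1 - 2*w)) * (centre_dist L k / \<bar>real j - real k\<bar>)"
    using \<open>h > 0\<close> by (subst mult_divide_mult_cancel_left) auto
  finally show ?thesis .
qed

lemma norm_lagrange_basis_perturbed_grid_le:
  fixes y :: "nat \<Rightarrow> real" and h w c :: real
  assumes S: "S \<subseteq> {0..2*L}" and "j \<in> S"
    and "h > 0" "0 \<le> w" "w < 1/2" "0 < c" "c \<le> 1"
    and near: "\<And>k. k \<in> S \<Longrightarrow> \<bar>y k - (real k - real L) * h\<bar> \<le> w * h"
    and chord: "\<And>j k. j \<in> S \<Longrightarrow> k \<in> S \<Longrightarrow> c * \<bar>y j - y k\<bar> \<le> cmod (cis (y j) - cis (y k))"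
  defines "m \<equiv> card ({0..2*L} - S)"
  shows "cmod (\<Prod>k\<in>S-{j}. (1 - cis (y k)) / (cis (y j) - cis (y k)))
           \<le> ((1 + w) / (c * (1 - 2*w)))^(2*L) * ((6 * real L)^m / fact m)"
proof -
  define \<beta> where "\<beta> = (1 + w) / (c * (1 - 2*w))"
  have "c * (1 - 2*w) \<le> 1 + w" using assms(4-7) mult_mono[of c 1 "1 - 2*w" 1] by simp
  then have "\<beta> \<ge> 1" unfolding \<beta>_def using assms(4-6) by simp
  have "cmod (\<Prod>k\<in>S-{j}. (1 - cis (y k)) / (cis (y j) - cis (y k)))
      = (\<Prod>k\<in>S-{j}. cmod ((1 - cis (y k)) / (cis (y j) - cis (y k))))"
    by (rule prod_norm[symmetric])
  also have "\<dots> \<le> (\<Prod>k\<in>S-{j}. \<beta> * (centre_dist L k / \<bar>real j - real k\<bar>))"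
    using lagrange_factor_perturbed_grid_le[OF near[OF \<open>j \<in> S\<close>] near _ assms(3-6) chord[OF \<open>j \<in> S\<close>]]
    unfolding \<beta>_def by (intro prod_mono) auto
  also have "\<dots> = \<beta> ^ card (S - {j}) * (\<Prod>k\<in>S-{j}. centre_dist L k / \<bar>real j - real k\<bar>)"
    by (simp only: prod.distrib prod_constant)
  also have "\<dots> \<le> \<beta> ^ (2*L) * ((6 * real L)^m / fact m)"
    unfolding m_def
  proof (intro mult_mono power_increasing prod_centre_dist_div_le[OF S \<open>j \<in> S\<close>])
    have "card S \<le> 2*L + 1" using card_mono[OF _ S] by simp
    then show "card (S - {j}) \<le> 2 * L" using S \<open>j \<in> S\<close> finite_subset by fastforce
    show "0 \<le> (\<Prod>k\<in>S-{j}. centre_dist L k / \<bar>real j - real k\<bar>)"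
      by (intro prod_nonneg) (auto intro: order_trans[OF _ centre_dist_ge_1])
  qed (use \<open>\<beta> \<ge> 1\<close> in auto)
  finally show ?thesis unfolding \<beta>_def .
qed

lemma norm_poly_1_le_perturbed_grid:
  fixes p :: "complex poly" and y :: "nat \<Rightarrow> real" and h w c B :: real
  assumes S: "S \<subseteq> {0..2*L}" and deg: "degree p < card S"
    and "h > 0" "0 \<le> w" "w < 1/2" "0 < c" "c \<le> 1"
    and near: "\<And>k. k \<in> S \<Longrightarrow> \<bar>y k - (real k - real L) * h\<bar> \<le> w * h"
    and chord: "\<And>j k. j \<in> S \<Longrightarrow> k \<in> S \<Longrightarrow> c * \<bar>y j - y k\<bar> \<le> cmod (cis (y j) - cis (y k))"
    and bound: "\<And>k. k \<in> S \<Longrightarrow> cmod (poly p (cis (y k))) \<le> B"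
  defines "m \<equiv> card ({0..2*L} - S)"
  shows "cmod (poly p 1)
           \<le> (2 * real L + 1) * B * (((1 + w) / (c * (1 - 2*w)))^(2*L) * ((6 * real L)^m / fact m))"
proof -
  define \<Lambda> where "\<Lambda> = ((1 + w) / (c * (1 - 2*w)))^(2*L) * ((6 * real L)^m / fact m)"
  define z where "z k = cis (y k)" for k
  have "finite S" using S finite_subset by blast
  have "inj_on z S"
  proof (rule inj_onI, rule ccontr)
    fix j k assume "j \<in> S" "k \<in> S" "z j = z k" "j \<noteq> k"
    then have "0 < c * ((1 - 2*w) * \<bar>real j - real k\<bar> * h)" using assms(3,5,6) by simp
    also have "\<dots> \<le> c * \<bar>y j - y k\<bar>"
      using perturbed_grid_separation[OF near near \<open>j \<noteq> k\<close> assms(3,4)] \<open>j \<in> S\<close> \<open>k \<in> S\<close> \<open>c > 0\<close>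
      by (intro mult_left_mono) auto
    also have "\<dots> \<le> cmod (z j - z k)" using chord \<open>j \<in> S\<close> \<open>k \<in> S\<close> unfolding z_def by blast
    finally show False using \<open>z j = z k\<close> by simp
  qed
  have basis: "cmod (\<Prod>k\<in>S-{j}. (1 - z k) / (z j - z k)) \<le> \<Lambda>" if "j \<in> S" for j
    unfolding z_def \<Lambda>_def m_def
    using norm_lagrange_basis_perturbed_grid_le[OF S that assms(3-7) near chord] .
  have "S \<noteq> {}" using deg by auto
  then have "B \<ge> 0" using bound by (meson all_not_in_conv norm_ge_zero order_trans)
  have "\<Lambda> \<ge> 0" using basis \<open>S \<noteq> {}\<close> by (meson all_not_in_conv norm_ge_zero order_trans)
  have "poly p 1 = (\<Sum>j\<in>S. poly p (z j) * (\<Prod>k\<in>S-{j}. (1 - z k) / (z j - z k)))"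
    by (rule poly_lagrange_interpolation[OF \<open>finite S\<close> \<open>inj_on z S\<close> deg])
  then have "cmod (poly p 1) \<le> (\<Sum>j\<in>S. cmod (poly p (z j)) * cmod (\<Prod>k\<in>S-{j}. (1 - z k) / (z j - z k)))"
    by (metis (no_types, lifting) norm_mult norm_sum sum.cong)
  also have "\<dots> \<le> (\<Sum>j\<in>S. B * \<Lambda>)"
    using bound basis \<open>B \<ge> 0\<close> unfolding z_def by (intro sum_mono mult_mono) auto
  also have "\<dots> \<le> (2 * real L + 1) * B * \<Lambda>"
  proof -
    have "real (card S) \<le> 2 * real L + 1" using card_mono[OF _ S] by simp
    then show ?thesis using \<open>B \<ge> 0\<close> \<open>\<Lambda> \<ge> 0\<close> by (simp add: mult_right_mono mult.assoc)
  qed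
  finally show ?thesis unfolding \<Lambda>_def .
qed

section \<open>A Remez-type inequality for weighted integrals\<close>

lemma integrable_norm_poly_cis_sq_times:
  fixes f :: "real \<Rightarrow> real" and p :: "complex poly"
  assumes "\<And>x. x \<in> {a..b} \<Longrightarrow> f x \<ge> 0" and "f integrable_on {a..b}"
  shows "(\<lambda>x. (cmod (poly p (cis x)))^2 * f x) integrable_on {a..b}"
proof -
  define g where "g x = (cmod (poly p (cis x)))^2" for x
  have "continuous_on UNIV g" unfolding g_def cis_conv_exp by (intro continuous_intros)
  then have g: "continuous_on {a..b} g" by (rule continuous_on_subset) simp
  have "f absolutely_integrable_on {a..b}"
    using assms by (intro nonnegative_absolutely_integrable_1) auto
  then have "(\<lambda>x. g x * f x) absolutely_integrable_on {a..b}"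
    using g by (intro absolutely_integrable_bounded_measurable_product_real
        continuous_imp_measurable_on_sets_lebesgue compact_imp_bounded compact_continuous_image) auto
  then show ?thesis unfolding g_def using absolutely_integrable_on_def by blast
qed

lemma integral_norm_poly_cis_sq_times_nonneg:
  fixes f :: "real \<Rightarrow> real" and p :: "complex poly"
  assumes "\<And>x. x \<in> {a..b} \<Longrightarrow> f x \<ge> 0" and "f integrable_on {a..b}"
  shows "0 \<le> integral {a..b} (\<lambda>x. (cmod (poly p (cis x)))^2 * f x)"
  using assms by (intro integral_nonneg integrable_norm_poly_cis_sq_times) auto

lemma borel_measurable_indicator_times_of_integrable:
  fixes f :: "real \<Rightarrow> real"
  assumes "f integrable_on S" "S \<in> sets lebesgue"
  shows "(\<lambda>x. indicator S x *\<^sub>R f x) \<in> borel_measurable lebesgue"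
  using integrable_imp_measurable[OF assms(1)] assms(2)
  by (subst (asm) borel_measurable_restrict_space_iff) auto

lemma markov_inequality_integral:
  fixes g :: "'a::euclidean_space \<Rightarrow> real"
  assumes "g integrable_on S" "\<And>x. x \<in> S \<Longrightarrow> 0 \<le> g x"
    and "A \<subseteq> S" "A \<in> lmeasurable" "\<And>x. x \<in> A \<Longrightarrow> c \<le> g x"
  shows "c * measure lebesgue A \<le> integral S g"
proof -
  have "A \<inter> S = A" using assms(3) by blast
  then have "indicat_real A integrable_on S" "integral S (indicat_real A) = measure lebesgue A"
    using assms(4) by (simp_all add: integrable_on_indicator integral_indicator)
  then have "c * measure lebesgue A = integral S (\<lambda>x. c * indicat_real A x)" by simp
  also have "\<dots> \<le> integral S g"
  proof (rule integral_le)
    show "(\<lambda>x. c * indicat_real A x) integrable_on S"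
      using \<open>indicat_real A integrable_on S\<close> by (rule integrable_on_mult_right)
    fix x assume "x \<in> S"
    then show "c * indicat_real A x \<le> g x" using assms(2,5) by (cases "x \<in> A") auto
  qed fact
  finally show ?thesis .
qed

lemma card_times_measure_le_disjoint_intervals:
  fixes c :: "'k \<Rightarrow> real"
  assumes "finite K" "B \<in> lmeasurable" "r \<ge> 0"
    and "\<And>k. k \<in> K \<Longrightarrow> {c k - r .. c k + r} \<subseteq> B"
    and "\<And>k k'. k \<in> K \<Longrightarrow> k' \<in> K \<Longrightarrow> k \<noteq> k' \<Longrightarrow> 2 * r < \<bar>c k - c k'\<bar>"
  shows "real (card K) * (2 * r) \<le> measure lebesgue B"
proof -
  have "disjoint_family_on (\<lambda>k. {c k - r .. c k + r}) K"
    unfolding disjoint_family_on_def using assms(5) by fastforce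
  then have "measure lebesgue (\<Union>k\<in>K. {c k - r .. c k + r}) = (\<Sum>k\<in>K. measure lebesgue {c k - r .. c k + r})"
    using assms(1) by (intro measure_finite_Union) (auto simp: emeasure_lborel_Icc_eq)
  also have "\<dots> = real (card K) * (2 * r)" using assms(3) by simp
  moreover have "measure lebesgue (\<Union>k\<in>K. {c k - r .. c k + r}) \<le> measure lebesgue B"
    using assms(1,2,4) by (intro measure_mono_fmeasurable) auto
  ultimately show ?thesis by simp
qed

lemma abs_le_of_near_grid:
  fixes h w :: real
  assumes "\<bar>x - (real k - real L) * h\<bar> \<le> w * h" "k \<le> 2*L" "h > 0" "w \<le> 1"
  shows "\<bar>x\<bar> \<le> (real L + 1) * h"
proof -
  have "\<bar>(real k - real L) * h\<bar> \<le> real L * h"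
    using assms(2,3) by (auto simp: abs_mult intro!: mult_right_mono)
  moreover have "w * h \<le> h" using assms(3,4) by simp
  ultimately show ?thesis using assms(1) by (simp add: distrib_right abs_le_iff)
qed

lemma grid_separated:
  fixes h w :: real
  assumes "k \<noteq> k'" "h > 0" "w < 1/2"
  shows "2 * (w * h) < \<bar>(real k - real L) * h - (real k' - real L) * h\<bar>"
proof -
  have "2 * w * h < 1 * h" using assms(2,3) by (intro mult_strict_right_mono) auto
  also have "\<dots> \<le> \<bar>real k - real k'\<bar> * h"
    using assms(1,2) mult_right_mono[of 1 "\<bar>real k - real k'\<bar>" h] by simp
  also have "\<dots> = \<bar>(real k - real L) * h - (real k' - real L) * h\<bar>"
    using assms(2) by (simp add: abs_mult flip: left_diff_distrib)
  finally show ?thesis by simp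
qed

lemma exists_grid_nodes_avoiding:
  fixes Bad :: "real set" and \<delta> w \<theta> \<rho> :: real
  assumes "Bad \<in> lmeasurable" "measure lebesgue Bad \<le> 2 * \<rho>"
    and "0 < \<delta>" "0 < w" "w < 1/2"
    and small: "\<rho> * (real L + 1) \<le> w * \<delta> * \<theta> * real L"
  defines "h \<equiv> \<delta> / (real L + 1)"
  obtains S y where "S \<subseteq> {0..2*L}" "real (card ({0..2*L} - S)) \<le> \<theta> * real L"
    and "\<And>k. k \<in> S \<Longrightarrow> \<bar>y k - (real k - real L) * h\<bar> \<le> w * h"
    and "\<And>k. k \<in> S \<Longrightarrow> y k \<in> {-\<delta>..\<delta>} - Bad"
proof -
  define cell where "cell k = {(real k - real L) * h - w * h .. (real k - real L) * h + w * h}" for k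
  define M where "M = {k \<in> {0..2*L}. cell k \<subseteq> Bad}"
  have "h > 0" unfolding h_def using assms(3) by simp
  have cell_sub: "cell k \<subseteq> {-\<delta>..\<delta>}" if "k \<le> 2*L" for k
  proof
    fix x assume "x \<in> cell k"
    then have "\<bar>x\<bar> \<le> (real L + 1) * h"
      using that \<open>h > 0\<close> assms(5) by (intro abs_le_of_near_grid[where w = w]) (auto simp: cell_def abs_le_iff)
    then show "x \<in> {-\<delta>..\<delta>}" unfolding h_def by auto
  qed
  have "real (card M) * (2 * (w * h)) \<le> measure lebesgue Bad"
  proof (rule card_times_measure_le_disjoint_intervals)
    fix k k' assume "k \<in> M" "k' \<in> M" "k \<noteq> k'"
    then show "2 * (w * h) < \<bar>(real k - real L) * h - (real k' - real L) * h\<bar>"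
      using \<open>h > 0\<close> assms(5) by (intro grid_separated) auto
  qed (use assms(1,4) \<open>h > 0\<close> in \<open>auto simp: M_def cell_def\<close>)
  then have "real (card M) * (2 * (w * h)) \<le> 2 * \<rho>" using assms(2) by linarith
  then have "real (card M) * (w * \<delta>) \<le> \<rho> * (real L + 1)"
    unfolding h_def by (simp add: field_simps)
  also have "\<dots> \<le> (\<theta> * real L) * (w * \<delta>)" using small by (simp add: ac_simps)
  finally have card_M: "real (card M) \<le> \<theta> * real L"
    using assms(3,4) by (simp add: mult_le_cancel_right_pos)
  define S where "S = {0..2*L} - M"
  define y where "y k = (SOME x. x \<in> cell k - Bad)" for k
  have y: "y k \<in> cell k - Bad" if "k \<in> S" for k
  proof -
    have "cell k - Bad \<noteq> {}" using that unfolding S_def M_def by auto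
    then show ?thesis unfolding y_def by (metis ex_in_conv someI)
  qed
  show ?thesis
  proof (rule that[of S y])
    show "S \<subseteq> {0..2*L}" unfolding S_def by auto
    have "{0..2*L} - S = M" unfolding S_def M_def by auto
    then show "real (card ({0..2*L} - S)) \<le> \<theta> * real L" using card_M by simp
  next
    fix k assume "k \<in> S"
    then show "\<bar>y k - (real k - real L) * h\<bar> \<le> w * h"
      using y[OF \<open>k \<in> S\<close>] unfolding cell_def abs_le_iff by auto
    have "k \<le> 2*L" using \<open>k \<in> S\<close> unfolding S_def by auto
    then show "y k \<in> {-\<delta>..\<delta>} - Bad" using y[OF \<open>k \<in> S\<close>] cell_sub[of k] by blast
  qed
qed

lemma power_div_fact_le_exp:
  fixes x :: real
  assumes "0 \<le> x"
  shows "x ^ m / fact m \<le> exp x"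
proof -
  have "(\<lambda>n. x^n /\<^sub>R fact n) sums exp x" by (rule exp_converges)
  moreover have "(\<Sum>n\<in>{m}. x^n /\<^sub>R fact n) \<le> suminf (\<lambda>n. x^n /\<^sub>R fact n)"
    by (rule sum_le_suminf) (use calculation assms in \<open>auto simp: sums_iff\<close>)
  ultimately show ?thesis by (simp add: sums_iff divide_inverse_commute)
qed

lemma power_div_fact_le_powr_exp:
  fixes \<theta> :: real
  assumes "0 < \<theta>" "\<theta> \<le> 6" "real m \<le> \<theta> * real L"
  shows "(6 * real L) ^ m / fact m \<le> (6/\<theta>) powr (\<theta> * real L) * exp (\<theta> * real L)"
proof -
  have "(6 * real L) ^ m = ((6/\<theta>) * (\<theta> * real L)) ^ m" using assms(1) by simp
  then have "(6 * real L) ^ m / fact m = (6/\<theta>) ^ m * ((\<theta> * real L) ^ m / fact m)"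
    by (simp only: power_mult_distrib times_divide_eq_right)
  also have "\<dots> \<le> (6/\<theta>) powr (\<theta> * real L) * exp (\<theta> * real L)"
  proof (intro mult_mono power_div_fact_le_exp)
    have "(6/\<theta>) ^ m = (6/\<theta>) powr (real m)" using assms(1) by (simp add: powr_realpow)
    also have "\<dots> \<le> (6/\<theta>) powr (\<theta> * real L)" using assms by (intro powr_mono) auto
    finally show "(6/\<theta>) ^ m \<le> (6/\<theta>) powr (\<theta> * real L)" .
  qed (use assms(1) in auto)
  finally show ?thesis .
qed

lemma measure_bad_set_le:
  fixes f :: "real \<Rightarrow> real" and p :: "complex poly"
  assumes nonneg: "\<And>x. x \<in> {-pi..pi} \<Longrightarrow> f x \<ge> 0" and int: "f integrable_on {-pi..pi}"
    and "\<delta> \<le> pi" "\<epsilon> > 0" "T > 0"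
    and small_values: "measure lebesgue {x \<in> {-\<delta>..\<delta>}. f x \<le> \<epsilon>} \<le> \<rho>"
    and integral: "integral {-pi..pi} (\<lambda>x. (cmod (poly p (cis x)))^2 * f x) \<le> \<epsilon> * T * \<rho>"
  defines "Bad \<equiv> {x \<in> {-\<delta>..\<delta>}. f x \<le> \<epsilon> \<or> T < (cmod (poly p (cis x)))^2}"
  shows "Bad \<in> lmeasurable" "measure lebesgue Bad \<le> 2 * \<rho>"
proof -
  define g where "g x = (cmod (poly p (cis x)))^2" for x
  define f' where "f' x = indicator {-pi..pi} x *\<^sub>R f x" for x
  have [measurable]: "f' \<in> borel_measurable lebesgue"
    unfolding f'_def using int by (rule borel_measurable_indicator_times_of_integrable) simp
  have "continuous_on UNIV g" unfolding g_def cis_conv_exp by (intro continuous_intros)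
  then have [measurable]: "g \<in> borel_measurable lebesgue"
    using continuous_imp_measurable_on_sets_lebesgue[of UNIV g] by (simp add: lebesgue_on_UNIV_eq)
  have sub: "{-\<delta>..\<delta>} \<subseteq> {-pi..pi}" using \<open>\<delta> \<le> pi\<close> by auto
  then have f'_eq: "f' x = f x" if "x \<in> {-\<delta>..\<delta>}" for x using that unfolding f'_def by auto
  define D where "D = {x \<in> {-\<delta>..\<delta>}. f x \<le> \<epsilon>}"
  define A where "A = {x \<in> {-\<delta>..\<delta>}. \<epsilon> < f x \<and> T < g x}"
  have D_eq: "D = {-\<delta>..\<delta>} \<inter> {x \<in> space lebesgue. f' x \<le> \<epsilon>}"
    unfolding D_def using f'_eq by auto
  have A_eq: "A = {-\<delta>..\<delta>} \<inter> {x \<in> space lebesgue. \<epsilon> < f' x \<and> T < g x}"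
    unfolding A_def using f'_eq by auto
  have "D \<in> sets lebesgue" unfolding D_eq by (intro sets.Int) (simp, measurable)
  then have D: "D \<in> lmeasurable" by (rule fmeasurableI2[of "{-\<delta>..\<delta>}", rotated 2]) (auto simp: D_def)
  have "A \<in> sets lebesgue" unfolding A_eq by (intro sets.Int) (simp, measurable)
  then have A: "A \<in> lmeasurable" by (rule fmeasurableI2[of "{-\<delta>..\<delta>}", rotated 2]) (auto simp: A_def)
  have "\<epsilon> * T * measure lebesgue A \<le> integral {-pi..pi} (\<lambda>x. g x * f x)"
  proof (rule markov_inequality_integral[OF _ _ _ A])
    show "(\<lambda>x. g x * f x) integrable_on {-pi..pi}"
      unfolding g_def using nonneg int by (rule integrable_norm_poly_cis_sq_times)
    show "A \<subseteq> {-pi..pi}" using sub unfolding A_def by blast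
    show "0 \<le> g x * f x" if "x \<in> {-pi..pi}" for x
      using nonneg[OF that] unfolding g_def by simp
    show "\<epsilon> * T \<le> g x * f x" if "x \<in> A" for x
      using that \<open>\<epsilon> > 0\<close> \<open>T > 0\<close> mult_mono[of T "g x" \<epsilon> "f x"] unfolding A_def by (simp add: mult.commute)
  qed
  then have "\<epsilon> * T * measure lebesgue A \<le> \<epsilon> * T * \<rho>" using integral unfolding g_def by linarith
  then have "measure lebesgue A \<le> \<rho>" using \<open>\<epsilon> > 0\<close> \<open>T > 0\<close> by (simp add: mult_le_cancel_left_pos)
  have "Bad = D \<union> A" unfolding Bad_def D_def A_def g_def by auto
  then show "Bad \<in> lmeasurable" using D A by (simp add: fmeasurable.Un)
  have "measure lebesgue Bad \<le> measure lebesgue D + measure lebesgue A"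
    unfolding \<open>Bad = D \<union> A\<close> using D A by (intro measure_Un_le) auto
  then show "measure lebesgue Bad \<le> 2 * \<rho>"
    using \<open>measure lebesgue A \<le> \<rho>\<close> small_values unfolding D_def by linarith
qed

text \<open>The first factor pays for the perturbation of the grid and for chords versus arcs,
  the second for at most \<open>\<theta> L\<close> missing nodes.\<close>
definition remez_factor :: "nat \<Rightarrow> real \<Rightarrow> real \<Rightarrow> real \<Rightarrow> real" where
  "remez_factor L \<delta> w \<theta> = ((1 + w) / ((1 - \<delta>^2/2) * (1 - 2*w)))^(2*L)
      * ((6/\<theta>) powr (\<theta> * real L) * exp (\<theta> * real L))"

lemma remez_factor_pos:
  assumes "0 < \<delta>" "\<delta> \<le> 1" "0 < w" "w < 1/2" "0 < \<theta>"
  shows "remez_factor L \<delta> w \<theta> > 0"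
proof -
  have "\<delta>^2 \<le> 1" using assms(1,2) by (simp add: power_le_one)
  then show ?thesis unfolding remez_factor_def using assms by (simp add: zero_less_mult_iff)
qed

text \<open>Remez-type inequality: if \<open>|p|\<^sup>2 f\<close> has small integral while \<open>f\<close> is rarely small
  near \<open>0\<close>, then \<open>|p|\<^sup>2 \<le> T\<close> outside a set of small measure; this leaves enough points of
  the grid of step \<open>\<delta> / (L + 1)\<close> to interpolate \<open>p\<close> at \<open>1\<close>.\<close>
lemma norm_poly_1_le_remez_factor:
  fixes f :: "real \<Rightarrow> real" and p :: "complex poly"
  assumes nonneg: "\<And>x. x \<in> {-pi..pi} \<Longrightarrow> f x \<ge> 0" and int: "f integrable_on {-pi..pi}"
    and "0 < \<delta>" "\<delta> \<le> 1" "0 < w" "w < 1/2" "0 < \<epsilon>" "0 < \<theta>" "\<theta> \<le> 1"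
    and small_values: "measure lebesgue {x \<in> {-\<delta>..\<delta>}. f x \<le> \<epsilon>} \<le> \<rho>"
    and small: "\<rho> * (real L + 1) \<le> w * \<delta> * \<theta> * real L"
    and "degree p \<le> L" "T > 0"
    and integral: "integral {-pi..pi} (\<lambda>x. (cmod (poly p (cis x)))^2 * f x) \<le> \<epsilon> * T * \<rho>"
  shows "cmod (poly p 1) \<le> (2 * real L + 1) * sqrt T * remez_factor L \<delta> w \<theta>"
proof -
  define Bad where "Bad = {x \<in> {-\<delta>..\<delta>}. f x \<le> \<epsilon> \<or> T < (cmod (poly p (cis x)))^2}"
  define c where "c = 1 - \<delta>^2/2"
  have "\<delta> \<le> pi" using \<open>\<delta> \<le> 1\<close> pi_gt3 by linarith
  have "\<delta>^2 \<le> 1" using \<open>0 < \<delta>\<close> \<open>\<delta> \<le> 1\<close> by (simp add: power_le_one)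
  then have "0 < c" "c \<le> 1" unfolding c_def by simp_all
  have "Bad \<in> lmeasurable" "measure lebesgue Bad \<le> 2 * \<rho>"
    using measure_bad_set_le[OF nonneg int \<open>\<delta> \<le> pi\<close> \<open>0 < \<epsilon>\<close> \<open>T > 0\<close> small_values integral]
    unfolding Bad_def by auto
  then obtain S y
    where S: "S \<subseteq> {0..2*L}" and card: "real (card ({0..2*L} - S)) \<le> \<theta> * real L"
      and near: "\<And>k. k \<in> S \<Longrightarrow> \<bar>y k - (real k - real L) * (\<delta> / (real L + 1))\<bar> \<le> w * (\<delta> / (real L + 1))"
      and good: "\<And>k. k \<in> S \<Longrightarrow> y k \<in> {-\<delta>..\<delta>} - Bad"
    using exists_grid_nodes_avoiding[OF _ _ \<open>0 < \<delta>\<close> \<open>0 < w\<close> \<open>w < 1/2\<close> small] by blast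
  define m where "m = card ({0..2*L} - S)"
  have "\<theta> * real L \<le> real L" using \<open>0 < \<theta>\<close> \<open>\<theta> \<le> 1\<close> by (intro mult_left_le_one_le) auto
  then have "m \<le> L" using card unfolding m_def by linarith
  moreover have "m = card {0..2*L} - card S"
    unfolding m_def using S by (intro card_Diff_subset) (auto intro: finite_subset)
  moreover have "card S \<le> card {0..2*L}" using S by (intro card_mono) auto
  moreover have "card {0..2*L} = 2*L + 1" by simp
  ultimately have deg: "degree p < card S" using \<open>degree p \<le> L\<close> by linarith
  have "cmod (poly p 1) \<le> (2 * real L + 1) * sqrt T
      * (((1 + w) / (c * (1 - 2*w)))^(2*L) * ((6 * real L)^m / fact m))"
    unfolding m_def
  proof (rule norm_poly_1_le_perturbed_grid[OF S deg _ _ \<open>w < 1/2\<close> \<open>0 < c\<close> \<open>c \<le> 1\<close> near])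
    fix j k assume "j \<in> S" "k \<in> S"
    then show "c * \<bar>y j - y k\<bar> \<le> cmod (cis (y j) - cis (y k))"
      unfolding c_def using good[of j] good[of k] \<open>\<delta> \<le> pi\<close> by (intro norm_cis_diff_ge_near_0) auto
  next
    fix k assume "k \<in> S"
    then have "(cmod (poly p (cis (y k))))^2 \<le> T" using good unfolding Bad_def by force
    then show "cmod (poly p (cis (y k))) \<le> sqrt T" by (simp add: real_le_rsqrt)
  qed (use \<open>0 < \<delta>\<close> \<open>0 < w\<close> in auto)
  also have "\<dots> \<le> (2 * real L + 1) * sqrt T * remez_factor L \<delta> w \<theta>"
    unfolding remez_factor_def c_def using card \<open>0 < \<theta>\<close> \<open>\<theta> \<le> 1\<close> \<open>0 < c\<close> \<open>w < 1/2\<close> \<open>T > 0\<close>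
    by (intro mult_left_mono power_div_fact_le_powr_exp) (auto simp: m_def c_def)
  finally show ?thesis .
qed

lemma remez_factor_eq_power:
  assumes "\<theta> > 0"
  shows "remez_factor L \<delta> w \<theta> = remez_factor 1 \<delta> w \<theta> ^ L"
proof -
  have "(6/\<theta>) powr (\<theta> * real L) = ((6/\<theta>) powr \<theta>) ^ L"
    using assms by (simp add: powr_powr[symmetric] powr_realpow)
  moreover have "exp (\<theta> * real L) = exp \<theta> ^ L" by (metis exp_of_nat_mult mult.commute)
  ultimately show ?thesis
    unfolding remez_factor_def by (simp add: power_mult power_mult_distrib flip: power_mult)
qed

lemma remez_factor_tendsto_1:
  "((\<lambda>t. remez_factor 1 (1/t) (1/t) (1/t)) \<longlongrightarrow> 1) at_top"
proof -
  have "((\<lambda>t::real. ((1 + 1/t) / ((1 - (1/t)^2/2) * (1 - 2*(1/t))))^2 * ((6*t) powr (1/t) * exp (1/t)))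
      \<longlongrightarrow> 1) at_top"
    by real_asymp
  then show ?thesis
    by (rule Lim_transform_eventually) (auto simp: remez_factor_def eventually_at_top_linorder intro!: exI[of _ 1])
qed

lemma integral_ge_remez_factor:
  fixes f :: "real \<Rightarrow> real" and p :: "complex poly"
  assumes nonneg: "\<And>x. x \<in> {-pi..pi} \<Longrightarrow> f x \<ge> 0" and int: "f integrable_on {-pi..pi}"
    and "0 < \<delta>" "\<delta> \<le> 1" "0 < w" "w < 1/2" "0 < \<epsilon>" "0 < \<theta>" "\<theta> \<le> 1" "0 < \<rho>"
    and small_values: "measure lebesgue {x \<in> {-\<delta>..\<delta>}. f x \<le> \<epsilon>} \<le> \<rho>"
    and small: "\<rho> * (real L + 1) \<le> w * \<delta> * \<theta> * real L"
    and "degree p \<le> L" "poly p 1 = 1"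
  shows "\<epsilon> * \<rho> / ((2 * real L + 1) * remez_factor L \<delta> w \<theta>)^2
           \<le> integral {-pi..pi} (\<lambda>x. (cmod (poly p (cis x)))^2 * f x)"
proof -
  define I where "I = integral {-pi..pi} (\<lambda>x. (cmod (poly p (cis x)))^2 * f x)"
  define K where "K = ((2 * real L + 1) * remez_factor L \<delta> w \<theta>)^2"
  have "K > 0" unfolding K_def using remez_factor_pos[OF assms(3-6,8), of L] by simp
  have "I \<ge> 0" unfolding I_def using nonneg int by (rule integral_norm_poly_cis_sq_times_nonneg)
  have "1 / K \<le> I / (\<epsilon> * \<rho>)"
  proof (rule dense_ge)
    fix T assume "I / (\<epsilon> * \<rho>) < T"
    moreover have "0 \<le> I / (\<epsilon> * \<rho>)" using \<open>I \<ge> 0\<close> \<open>0 < \<epsilon>\<close> \<open>0 < \<rho>\<close> by simp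
    ultimately have "T > 0" by linarith
    have "I \<le> \<epsilon> * T * \<rho>"
      using \<open>I / (\<epsilon> * \<rho>) < T\<close> \<open>0 < \<epsilon>\<close> \<open>0 < \<rho>\<close> by (simp add: field_simps)
    then have "1 \<le> (2 * real L + 1) * sqrt T * remez_factor L \<delta> w \<theta>"
      using norm_poly_1_le_remez_factor[OF nonneg int assms(3-9) small_values small \<open>degree p \<le> L\<close> \<open>T > 0\<close>]
        \<open>poly p 1 = 1\<close> unfolding I_def by simp
    then have "1 \<le> ((2 * real L + 1) * sqrt T * remez_factor L \<delta> w \<theta>)^2"
      by (metis one_le_power)
    also have "\<dots> = K * T" unfolding K_def using \<open>T > 0\<close> by (simp add: power_mult_distrib)
    finally show "1 / K \<le> T" using \<open>K > 0\<close> by (simp add: field_simps)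
  qed
  then show ?thesis
    using \<open>K > 0\<close> \<open>0 < \<epsilon>\<close> \<open>0 < \<rho>\<close> unfolding I_def K_def by (simp add: field_simps)
qed

section \<open>Upper bounds from test polynomials\<close>

lemma one_in_Qn1: "1 \<in> Qn1 n"
  unfolding Qn1_def by simp

lemma sigma_sq_le:
  fixes f :: "real \<Rightarrow> real"
  assumes "\<And>x. x \<in> {-pi..pi} \<Longrightarrow> f x \<ge> 0" "f integrable_on {-pi..pi}" "q \<in> Qn1 n"
  shows "sigma_sq n f \<le> integral {-pi..pi} (\<lambda>x. (cmod (poly q (cis x)))^2 * f x)"
  unfolding sigma_sq_def using assms integral_norm_poly_cis_sq_times_nonneg
  by (intro cINF_lower bdd_belowI[of _ 0]) auto

lemma le_sigma_sq:
  assumes "\<And>q. q \<in> Qn1 n \<Longrightarrow> K \<le> integral {-pi..pi} (\<lambda>x. (cmod (poly q (cis x)))^2 * f x)"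
  shows "K \<le> sigma_sq n f"
  unfolding sigma_sq_def using assms one_in_Qn1 by (intro cINF_greatest) auto

lemma sigma_le_sqrt_integral:
  fixes f :: "real \<Rightarrow> real"
  assumes "\<And>x. x \<in> {-pi..pi} \<Longrightarrow> f x \<ge> 0" "f integrable_on {-pi..pi}"
  shows "sigma n f \<le> sqrt (integral {-pi..pi} f)"
  using sigma_sq_le[OF assms one_in_Qn1] unfolding sigma_def by simp

lemma half_one_plus_x_power_in_Qn1: "[:1/2, 1/2:] ^ n \<in> Qn1 n"
proof -
  have "degree ([:1/2, 1/2:] ^ n :: complex poly) \<le> degree ([:1/2, 1/2:] :: complex poly) * n"
    by (rule degree_power_le)
  then show ?thesis unfolding Qn1_def by (simp add: poly_power)
qed

lemma norm_poly_half_one_plus_x_power_cis: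
  "cmod (poly ([:1/2, 1/2:] ^ n) (cis x)) = \<bar>cos (x/2)\<bar> ^ n"
proof -
  have "poly [:1/2, 1/2:] (cis x) = (cis x - cis pi) / 2" by (simp add: field_simps cis_pi)
  then have "cmod (poly [:1/2, 1/2:] (cis x)) = cmod ((cis x - cis pi) / 2)" by (simp only:)
  also have "\<dots> = cmod (cis x - cis pi) / 2" by (simp add: norm_divide)
  also have "\<dots> = \<bar>sin ((x - pi)/2)\<bar>" unfolding norm_cis_diff by simp
  also have "sin ((x - pi)/2) = - cos (x/2)" by (simp add: diff_divide_distrib sin_diff)
  finally show ?thesis by (simp add: poly_power norm_power)
qed

lemma norm_poly_half_one_plus_x_power_cis_le:
  assumes "0 \<le> \<alpha>" "\<alpha> \<le> \<bar>x\<bar>" "\<bar>x\<bar> \<le> pi"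
  shows "(cmod (poly ([:1/2, 1/2:] ^ n) (cis x)))^2 \<le> cos (\<alpha>/2) ^ (2*n)"
proof -
  have "cos (\<bar>x\<bar>/2) \<le> cos (\<alpha>/2)" by (rule cos_monotone_0_pi_le) (use assms in auto)
  moreover have "0 \<le> cos (\<bar>x\<bar>/2)" by (rule cos_ge_zero) (use assms in auto)
  moreover have "cos (x/2) = cos (\<bar>x\<bar>/2)" by (cases "x \<ge> 0") auto
  ultimately have "\<bar>cos (x/2)\<bar> ^ (2*n) \<le> cos (\<alpha>/2) ^ (2*n)" by (intro power_mono) auto
  then show ?thesis unfolding norm_poly_half_one_plus_x_power_cis by (simp add: power_mult mult.commute)
qed

lemma integral_half_one_plus_x_power_le:
  fixes f :: "real \<Rightarrow> real"
  assumes nonneg: "\<And>x. x \<in> {-pi..pi} \<Longrightarrow> f x \<ge> 0" and int: "f integrable_on {-pi..pi}"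
    and "0 \<le> \<alpha>" and ae: "AE x in lborel. \<bar>x\<bar> < \<alpha> \<longrightarrow> f x = 0"
  shows "integral {-pi..pi} (\<lambda>x. (cmod (poly ([:1/2, 1/2:] ^ n) (cis x)))^2 * f x)
           \<le> cos (\<alpha>/2) ^ (2*n) * integral {-pi..pi} f"
proof -
  define g where "g x = (cmod (poly ([:1/2, 1/2:] ^ n) (cis x)))^2 * f x" for x
  obtain N where N: "{x. \<not> (\<bar>x\<bar> < \<alpha> \<longrightarrow> f x = 0)} \<subseteq> N" "emeasure lborel N = 0" "N \<in> sets lborel"
    using ae by (auto elim!: AE_E)
  then have "negligible N" unfolding negligible_iff_null_sets by (auto intro: null_sets_completionI)
  define g' where "g' x = (if x \<in> N then 0 else g x)" for x
  have "g integrable_on {-pi..pi}" unfolding g_def using nonneg int by (rule integrable_norm_poly_cis_sq_times)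
  have "integral {-pi..pi} g = integral {-pi..pi} g'"
    using \<open>negligible N\<close> by (intro integral_spike) (auto simp: g'_def)
  also have "\<dots> \<le> integral {-pi..pi} (\<lambda>x. cos (\<alpha>/2) ^ (2*n) * f x)"
  proof (rule integral_le)
    show "g' integrable_on {-pi..pi}"
      using \<open>g integrable_on {-pi..pi}\<close> \<open>negligible N\<close> by (rule integrable_spike) (auto simp: g'_def)
    show "(\<lambda>x. cos (\<alpha>/2) ^ (2*n) * f x) integrable_on {-pi..pi}" using int by (rule integrable_on_mult_right)
    fix x assume x: "x \<in> {-pi..pi}"
    have "0 \<le> cos (\<alpha>/2) ^ (2*n)" by (simp add: power_mult)
    then show "g' x \<le> cos (\<alpha>/2) ^ (2*n) * f x"
      using N(1) nonneg[OF x] x \<open>0 \<le> \<alpha>\<close> norm_poly_half_one_plus_x_power_cis_le[of \<alpha> x n]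
      by (cases "x \<in> N"; cases "\<bar>x\<bar> < \<alpha>") (auto simp: g'_def g_def intro: mult_right_mono)
  qed
  finally show ?thesis unfolding g_def by simp
qed

lemma limsup_root_sigma_le_cos:
  fixes f :: "real \<Rightarrow> real"
  assumes nonneg: "\<And>x. x \<in> {-pi..pi} \<Longrightarrow> f x \<ge> 0" and int: "f integrable_on {-pi..pi}"
    and pos: "integral {-pi..pi} f > 0"
    and "0 < \<alpha>" "\<alpha> < pi" and ae: "AE x in lborel. \<bar>x\<bar> < \<alpha> \<longrightarrow> f x = 0"
  shows "limsup (\<lambda>n. ereal (root n (sigma n f))) \<le> ereal (cos (\<alpha> / 2))"
proof -
  define F where "F = integral {-pi..pi} f"
  define c where "c = cos (\<alpha>/2)"
  have "c > 0" unfolding c_def using assms(4,5) by (intro cos_gt_zero_pi) auto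
  have "sigma n f \<le> c^n * sqrt F" for n
  proof -
    have "sigma_sq n f \<le> c ^ (2*n) * F"
      using sigma_sq_le[OF nonneg int half_one_plus_x_power_in_Qn1, of n]
        integral_half_one_plus_x_power_le[OF nonneg int _ ae, of n] \<open>0 < \<alpha>\<close>
      unfolding F_def c_def by linarith
    then have "sigma_sq n f \<le> (c^n)^2 * F" by (simp add: power_mult mult.commute)
    then have "sigma n f \<le> sqrt ((c^n)^2 * F)" unfolding sigma_def by simp
    then show ?thesis using \<open>c > 0\<close> by (simp add: real_sqrt_mult)
  qed
  then have "eventually (\<lambda>n. ereal (root n (sigma n f)) \<le> ereal (c * root n (sqrt F))) sequentially"
  proof (intro eventually_sequentiallyI[of 1])
    fix n :: nat assume "n \<ge> 1" and "\<And>n. sigma n f \<le> c^n * sqrt F"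
    then have "root n (sigma n f) \<le> root n (c^n * sqrt F)" by (intro real_root_le_mono) auto
    also have "\<dots> = c * root n (sqrt F)"
      using \<open>n \<ge> 1\<close> \<open>c > 0\<close> by (simp add: real_root_mult real_root_power_cancel)
    finally show "ereal (root n (sigma n f)) \<le> ereal (c * root n (sqrt F))" by simp
  qed
  then have "limsup (\<lambda>n. ereal (root n (sigma n f))) \<le> limsup (\<lambda>n. ereal (c * root n (sqrt F)))"
    by (rule Limsup_mono)
  also have "\<dots> = ereal c"
  proof (rule lim_imp_Limsup)
    have "(\<lambda>n. c * root n (sqrt F)) \<longlonglongrightarrow> c * 1"
      using pos unfolding F_def by (intro tendsto_mult tendsto_const LIMSEQ_root_const) auto
    then show "(\<lambda>n. ereal (c * root n (sqrt F))) \<longlonglongrightarrow> ereal c" by (intro tendsto_ereal) simp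
  qed simp
  finally show ?thesis unfolding c_def .
qed

section \<open>The geometric lower bound\<close>

lemma measure_sublevel_tendsto_0:
  fixes g :: "'a::euclidean_space \<Rightarrow> real"
  assumes "E \<in> lmeasurable" "g \<in> borel_measurable lebesgue" and pos: "AE x in lebesgue. x \<in> E \<longrightarrow> g x > 0"
  shows "(\<lambda>k. measure lebesgue {x \<in> E. g x \<le> 1 / real (Suc k)}) \<longlonglongrightarrow> 0"
proof -
  define D where "D k = {x \<in> E. g x \<le> 1 / real (Suc k)}" for k
  have "D k = E \<inter> {x \<in> space lebesgue. g x \<le> 1 / real (Suc k)}" for k unfolding D_def by auto
  moreover have "{x \<in> space lebesgue. g x \<le> c} \<in> sets lebesgue" for c using assms(2) by measurable
  ultimately have D_sets: "D k \<in> sets lebesgue" for k using fmeasurableD[OF assms(1)] by auto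
  have "decseq D"
  proof (rule decseq_SucI)
    fix k
    have "1 / real (Suc (Suc k)) \<le> 1 / real (Suc k)" by (simp add: frac_le)
    then show "D (Suc k) \<subseteq> D k" unfolding D_def by auto
  qed
  moreover have "emeasure lebesgue (D k) \<noteq> \<infinity>" for k
  proof -
    have "emeasure lebesgue (D k) \<le> emeasure lebesgue E"
      using fmeasurableD[OF assms(1)] by (intro emeasure_mono) (auto simp: D_def)
    then show ?thesis using fmeasurableD2[OF assms(1)] by (auto simp: top_unique)
  qed
  ultimately have "(\<lambda>k. measure lebesgue (D k)) \<longlonglongrightarrow> measure lebesgue (\<Inter>k. D k)"
    using D_sets by (intro Lim_measure_decseq) auto
  moreover have "(\<Inter>k. D k) \<in> null_sets lebesgue"
  proof -
    obtain N where N: "{x \<in> space lebesgue. \<not> (x \<in> E \<longrightarrow> g x > 0)} \<subseteq> N"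
        "emeasure lebesgue N = 0" "N \<in> sets lebesgue"
      using pos by (rule AE_E)
    have "\<not> g x > 0" if "x \<in> (\<Inter>k. D k)" for x
    proof
      assume "g x > 0"
      then obtain k where "inverse (real (Suc k)) < g x" using reals_Archimedean by blast
      moreover have "g x \<le> 1 / real (Suc k)" using that unfolding D_def by auto
      ultimately show False by (simp add: inverse_eq_divide)
    qed
    then have "(\<Inter>k. D k) \<subseteq> N" using N(1) unfolding D_def by auto
    moreover have "N \<in> null_sets lebesgue" using N(2,3) by (rule null_setsI)
    ultimately show ?thesis by (rule null_sets_completion_subset)
  qed
  ultimately show ?thesis unfolding D_def by (simp add: measure_def null_setsD1)
qed

lemma exists_small_values_measure_le:
  fixes f :: "real \<Rightarrow> real"
  assumes int: "f integrable_on {-pi..pi}"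
    and ae: "AE x in lborel. \<bar>x\<bar> < \<delta>\<^sub>0 \<longrightarrow> f x > 0" and "\<delta> < \<delta>\<^sub>0" "\<delta> \<le> pi" "r > 0"
  shows "\<exists>\<epsilon>>0. measure lebesgue {x \<in> {-\<delta>..\<delta>}. f x \<le> \<epsilon>} \<le> r"
proof -
  define f' where "f' x = indicator {-pi..pi} x *\<^sub>R f x" for x
  have f'_eq: "f' x = f x" if "x \<in> {-\<delta>..\<delta>}" for x using that \<open>\<delta> \<le> pi\<close> unfolding f'_def by auto
  have "f' \<in> borel_measurable lebesgue"
    unfolding f'_def using int by (rule borel_measurable_indicator_times_of_integrable) simp
  moreover have "AE x in lebesgue. \<bar>x\<bar> < \<delta>\<^sub>0 \<longrightarrow> f x > 0" by (rule AE_completion[OF ae])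
  then have "AE x in lebesgue. x \<in> {-\<delta>..\<delta>} \<longrightarrow> f' x > 0"
    by eventually_elim (use f'_eq \<open>\<delta> < \<delta>\<^sub>0\<close> in auto)
  ultimately have "(\<lambda>k. measure lebesgue {x \<in> {-\<delta>..\<delta>}. f' x \<le> 1 / real (Suc k)}) \<longlonglongrightarrow> 0"
    by (intro measure_sublevel_tendsto_0) auto
  then have "eventually (\<lambda>k. measure lebesgue {x \<in> {-\<delta>..\<delta>}. f' x \<le> 1 / real (Suc k)} < r) sequentially"
    using \<open>r > 0\<close> by (rule order_tendstoD(2))
  then obtain k where "measure lebesgue {x \<in> {-\<delta>..\<delta>}. f' x \<le> 1 / real (Suc k)} < r"
    using eventually_happens'[OF trivial_limit_sequentially] by blast
  moreover have "{x \<in> {-\<delta>..\<delta>}. f' x \<le> 1 / real (Suc k)} = {x \<in> {-\<delta>..\<delta>}. f x \<le> 1 / real (Suc k)}"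
    using f'_eq by auto
  ultimately show ?thesis by (intro exI[of _ "1 / real (Suc k)"]) auto
qed

lemma sigma_ge_geometric:
  fixes f :: "real \<Rightarrow> real" and t :: real
  assumes nonneg: "\<And>x. x \<in> {-pi..pi} \<Longrightarrow> f x \<ge> 0" and int: "f integrable_on {-pi..pi}"
    and ae: "AE x in lborel. \<bar>x\<bar> < \<delta>\<^sub>0 \<longrightarrow> f x > 0" and "t \<ge> 3" "2 \<le> t * \<delta>\<^sub>0"
  defines "r \<equiv> remez_factor 1 (1/t) (1/t) (1/t)"
  shows "\<exists>C>0. \<forall>n\<ge>1. C / (real n * r ^ n) \<le> sigma n f"
proof -
  define \<rho> where "\<rho> = 1 / (2 * t^3)"
  have "\<rho> > 0" unfolding \<rho>_def using \<open>t \<ge> 3\<close> by simp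
  have t: "0 < 1/t" "1/t \<le> 1" "1/t < 1/2" using \<open>t \<ge> 3\<close> by auto
  have "1/t < \<delta>\<^sub>0" using assms(4,5) by (simp add: field_simps)
  moreover have "1/t \<le> pi" using t(2) pi_gt3 by linarith
  ultimately obtain \<epsilon> where "\<epsilon> > 0" and small_values: "measure lebesgue {x \<in> {-(1/t)..1/t}. f x \<le> \<epsilon>} \<le> \<rho>"
    using exists_small_values_measure_le[OF int ae _ _ \<open>\<rho> > 0\<close>] by blast
  have "r > 0" unfolding r_def using remez_factor_pos[of "1/t" "1/t" "1/t"] t by simp
  define C where "C = sqrt (\<epsilon> * \<rho>) / 3"
  have "C / (real n * r ^ n) \<le> sigma n f" if "n \<ge> 1" for n
  proof -
    have "\<rho> * (real n + 1) \<le> 1/t * (1/t) * (1/t) * real n"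
      unfolding \<rho>_def using \<open>n \<ge> 1\<close> \<open>t \<ge> 3\<close> by (simp add: field_simps power3_eq_cube)
    note lower = integral_ge_remez_factor[OF nonneg int t(1,2,1,3) \<open>\<epsilon> > 0\<close> t(1,2) \<open>\<rho> > 0\<close> small_values this]
    define K where "K = (2 * real n + 1) * r ^ n"
    have "K > 0" unfolding K_def using \<open>r > 0\<close> by simp
    have "remez_factor n (1/t) (1/t) (1/t) = r ^ n"
      unfolding r_def by (rule remez_factor_eq_power[OF t(1)])
    then have "\<epsilon> * \<rho> / K^2 \<le> integral {-pi..pi} (\<lambda>x. (cmod (poly q (cis x)))^2 * f x)"
      if "q \<in> Qn1 n" for q
      using lower that unfolding K_def Qn1_def by auto
    then have "\<epsilon> * \<rho> / K^2 \<le> sigma_sq n f" by (rule le_sigma_sq)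
    then have "sqrt (\<epsilon> * \<rho> / K^2) \<le> sigma n f" unfolding sigma_def by (rule real_sqrt_le_mono)
    moreover have "sqrt (\<epsilon> * \<rho> / K^2) = sqrt (\<epsilon> * \<rho>) / K"
      using \<open>K > 0\<close> by (simp add: real_sqrt_divide)
    ultimately have "sqrt (\<epsilon> * \<rho>) / ((2 * real n + 1) * r ^ n) \<le> sigma n f"
      unfolding K_def by simp
    moreover have "(2 * real n + 1) * r ^ n \<le> (3 * real n) * r ^ n"
      using \<open>n \<ge> 1\<close> \<open>r > 0\<close> by (intro mult_right_mono) auto
    then have "sqrt (\<epsilon> * \<rho>) / ((3 * real n) * r ^ n) \<le> sqrt (\<epsilon> * \<rho>) / ((2 * real n + 1) * r ^ n)"
      using \<open>r > 0\<close> \<open>n \<ge> 1\<close> \<open>\<epsilon> > 0\<close> \<open>\<rho> > 0\<close> by (intro divide_left_mono) auto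
    moreover have "C / (real n * r ^ n) = sqrt (\<epsilon> * \<rho>) / ((3 * real n) * r ^ n)"
      unfolding C_def by simp
    ultimately show ?thesis by linarith
  qed
  moreover have "C > 0" unfolding C_def using \<open>\<epsilon> > 0\<close> \<open>\<rho> > 0\<close> by simp
  ultimately show ?thesis by blast
qed

lemma eventually_less_root_of_geometric_lower_bound:
  fixes x :: "nat \<Rightarrow> real"
  assumes "C > 0" "r > 0" "\<And>n. n \<ge> 1 \<Longrightarrow> C / (real n * r ^ n) \<le> x n" "a < 1 / r"
  shows "eventually (\<lambda>n. a < root n (x n)) sequentially"
proof -
  have "(\<lambda>n. root n C / (root n (real n) * r)) \<longlonglongrightarrow> 1 / (1 * r)"
    using assms(1,2) by (intro tendsto_divide tendsto_mult LIMSEQ_root_const LIMSEQ_root tendsto_const) auto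
  then have "eventually (\<lambda>n. a < root n C / (root n (real n) * r)) sequentially"
    using assms(4) by (intro order_tendstoD(1)) auto
  moreover have "eventually (\<lambda>n. root n C / (root n (real n) * r) \<le> root n (x n)) sequentially"
  proof (rule eventually_sequentiallyI[of 1])
    fix n :: nat assume "n \<ge> 1"
    then have "root n C / (root n (real n) * r) = root n (C / (real n * r ^ n))"
      using assms(2) by (simp add: real_root_divide real_root_mult real_root_power_cancel)
    also have "\<dots> \<le> root n (x n)" using assms(3) \<open>n \<ge> 1\<close> by (intro real_root_le_mono) auto
    finally show "root n C / (root n (real n) * r) \<le> root n (x n)" .
  qed
  ultimately show ?thesis by eventually_elim simp
qed

lemma root_sigma_tendsto_1:
  fixes f :: "real \<Rightarrow> real"
  assumes nonneg: "\<And>x. x \<in> {-pi..pi} \<Longrightarrow> f x \<ge> 0" and int: "f integrable_on {-pi..pi}"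
    and pos: "integral {-pi..pi} f > 0"
    and "\<delta>\<^sub>0 > 0" and ae: "AE x in lborel. \<bar>x\<bar> < \<delta>\<^sub>0 \<longrightarrow> f x > 0"
  shows "(\<lambda>n. root n (sigma n f)) \<longlonglongrightarrow> 1"
proof (rule order_tendstoI)
  fix a :: real assume "a < 1"
  define r where "r t = remez_factor 1 (1/t) (1/t) (1/t)" for t
  have "((\<lambda>t. 1 / r t) \<longlongrightarrow> 1 / 1) at_top"
    unfolding r_def by (intro tendsto_divide tendsto_const remez_factor_tendsto_1) simp
  then have "eventually (\<lambda>t. a < 1 / r t) at_top" using \<open>a < 1\<close> by (intro order_tendstoD(1)) auto
  moreover have "eventually (\<lambda>t. max 3 (2 / \<delta>\<^sub>0) \<le> t) at_top" by (rule eventually_ge_at_top)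
  ultimately have "eventually (\<lambda>t. a < 1 / r t \<and> 3 \<le> t \<and> 2 \<le> t * \<delta>\<^sub>0) at_top"
    by eventually_elim (use \<open>\<delta>\<^sub>0 > 0\<close> in \<open>auto simp: field_simps\<close>)
  then obtain t where t: "a < 1 / r t" "3 \<le> t" "2 \<le> t * \<delta>\<^sub>0"
    using eventually_happens'[OF trivial_limit_at_top_linorder] by blast
  then obtain C where "C > 0" "\<And>n. n \<ge> 1 \<Longrightarrow> C / (real n * r t ^ n) \<le> sigma n f"
    using sigma_ge_geometric[OF nonneg int ae t(2,3)] unfolding r_def by blast
  moreover have "r t > 0" unfolding r_def using t(2) by (intro remez_factor_pos) auto
  ultimately show "eventually (\<lambda>n. a < root n (sigma n f)) sequentially"
    using t(1) by (intro eventually_less_root_of_geometric_lower_bound)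
next
  fix a :: real assume "a > 1"
  define F where "F = integral {-pi..pi} f"
  have "(\<lambda>n. root n (sqrt F)) \<longlonglongrightarrow> 1" using pos unfolding F_def by (intro LIMSEQ_root_const) auto
  then have "eventually (\<lambda>n. root n (sqrt F) < a) sequentially" using \<open>a > 1\<close> by (rule order_tendstoD)
  moreover have "eventually (\<lambda>n. root n (sigma n f) \<le> root n (sqrt F)) sequentially"
    using sigma_le_sqrt_integral[OF nonneg int] unfolding F_def
    by (intro eventually_sequentiallyI[of 1] real_root_le_mono) auto
  ultimately show "eventually (\<lambda>n. root n (sigma n f) < a) sequentially" by eventually_elim simp
qed

theorem theorem8p2:
  fixes f :: "real \<Rightarrow> real"
  assumes nonneg: "\<And>x. x \<in> {-pi..pi} \<Longrightarrow> f x \<ge> 0"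
    and int: "f integrable_on {-pi..pi}"
    and pos: "integral {-pi..pi} f > 0"
  shows "((\<exists>\<delta>>0. AE x in lborel. \<bar>x\<bar> < \<delta> \<longrightarrow> f x > 0)
            \<longrightarrow> (\<lambda>n. root n (sigma n f)) \<longlonglongrightarrow> 1)
       \<and> (\<forall>\<alpha>. 0 < \<alpha> \<and> \<alpha> < pi \<and> (AE x in lborel. \<bar>x\<bar> < \<alpha> \<longrightarrow> f x = 0)
            \<longrightarrow> limsup (\<lambda>n. ereal (root n (sigma n f))) \<le> ereal (cos (\<alpha> / 2)))"
proof (intro conjI impI allI)
  assume "\<exists>\<delta>>0. AE x in lborel. \<bar>x\<bar> < \<delta> \<longrightarrow> f x > 0"
  then obtain \<delta> where "\<delta> > 0" "AE x in lborel. \<bar>x\<bar> < \<delta> \<longrightarrow> f x > 0" by blast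
  then show "(\<lambda>n. root n (sigma n f)) \<longlonglongrightarrow> 1" using root_sigma_tendsto_1[OF nonneg int pos] by blast
next
  fix \<alpha> assume "0 < \<alpha> \<and> \<alpha> < pi \<and> (AE x in lborel. \<bar>x\<bar> < \<alpha> \<longrightarrow> f x = 0)"
  then show "limsup (\<lambda>n. ereal (root n (sigma n f))) \<le> ereal (cos (\<alpha> / 2))"
    using limsup_root_sigma_le_cos[OF nonneg int pos] by blast
qed

end
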